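(* Let $G$ be a $k$-cozy graph whose edge connectivity $\kappa'(G)$ satisfies $\kappa'(G)<k$. Then $\kappa'(G)$ is even.
   Context: An undirected graph $G$ is $k$-cozy if it is connected, $k$-regular, and equipped with a $1$-factorization, i.e., an assignment of colors from $\{1,\dots,k\}$ to its edges such that the $k$ edges incident at each vertex receive distinct colors. The edge connectivity $\kappa'(G)$ is the minimum number of edges whose removal disconnects $G$. *)

theory Defs
  imports Main
begin

definition graph :: "'a set \<Rightarrow> 'a set set \<Rightarrow> bool" where
  "graph V E \<longleftrightarrow> finite V \<and> (\<forall>e\<in>E. e \<subseteq> V \<and> card e = 2)"

definition adj :: "'a set set \<Rightarrow> ('a \<times> 'a) set" where
  "adj E = {(u, v). {u, v} \<in> E}"

definition connected_graph :: "'a set \<Rightarrow> 'a set set \<Rightarrow> bool" where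
  "connected_graph V E \<longleftrightarrow> V \<noteq> {} \<and> (\<forall>u\<in>V. \<forall>v\<in>V. (u, v) \<in> (adj E)\<^sup>*)"

definition degree :: "'a set set \<Rightarrow> 'a \<Rightarrow> nat" where
  "degree E v = card {e \<in> E. v \<in> e}"

definition regular :: "nat \<Rightarrow> 'a set \<Rightarrow> 'a set set \<Rightarrow> bool" where
  "regular k V E \<longleftrightarrow> (\<forall>v\<in>V. degree E v = k)"

definition one_factorization :: "nat \<Rightarrow> 'a set \<Rightarrow> 'a set set \<Rightarrow> ('a set \<Rightarrow> nat) \<Rightarrow> bool" where
  "one_factorization k V E col \<longleftrightarrow>
     (\<forall>e\<in>E. col e \<in> {1..k}) \<and>
     (\<forall>v\<in>V. inj_on col {e \<in> E. v \<in> e})"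

definition cozy :: "nat \<Rightarrow> 'a set \<Rightarrow> 'a set set \<Rightarrow> ('a set \<Rightarrow> nat) \<Rightarrow> bool" where
  "cozy k V E col \<longleftrightarrow> graph V E \<and> connected_graph V E \<and> regular k V E
     \<and> one_factorization k V E col"

definition edge_connectivity :: "'a set \<Rightarrow> 'a set set \<Rightarrow> nat" where
  "edge_connectivity V E = (LEAST n. \<exists>F \<subseteq> E. card F = n \<and> \<not> connected_graph V (E - F))"

end

theory Submission
  imports Defs
begin

text \<open>Each colour class of the 1-factorization is a perfect matching, and a perfect matching
  meets the cut of a vertex set S in a number of edges congruent to |S| modulo 2. A minimum
  disconnecting edge set may be taken to be a cut. If |S| is even, every colour class meets
  that cut evenly, so its size is even; if |S| is odd, every one of the k colours meets it,
  so its size is at least k.\<close>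

definition cut_edges :: "'a set \<Rightarrow> 'a set set \<Rightarrow> 'a set \<Rightarrow> 'a set set" where
  "cut_edges V E S = {e \<in> E. \<exists>x\<in>S. \<exists>y\<in>V - S. e = {x, y}}"

definition perfect_matching :: "'a set \<Rightarrow> 'a set set \<Rightarrow> bool" where
  "perfect_matching V M \<longleftrightarrow> (\<forall>e\<in>M. e \<subseteq> V \<and> card e = 2) \<and> (\<forall>v\<in>V. \<exists>!e. e \<in> M \<and> v \<in> e)"

lemma finite_edges:
  assumes "graph V E"
  shows "finite E"
  using assms unfolding graph_def by (meson Pow_iff finite_Pow_iff finite_subset subsetI)

lemma cut_edges_subset_of_reachable:
  assumes "F \<subseteq> E"
  shows "cut_edges V E {w \<in> V. (u, w) \<in> (adj (E - F))\<^sup>*} \<subseteq> F"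
proof
  fix e assume "e \<in> cut_edges V E {w \<in> V. (u, w) \<in> (adj (E - F))\<^sup>*}"
  then obtain x y where xy: "e \<in> E" "e = {x, y}" "(u, x) \<in> (adj (E - F))\<^sup>*"
      "y \<in> V" "(u, y) \<notin> (adj (E - F))\<^sup>*"
    by (auto simp: cut_edges_def)
  show "e \<in> F"
  proof (rule ccontr)
    assume "e \<notin> F"
    then have "(x, y) \<in> adj (E - F)" using xy by (auto simp: adj_def)
    then show False using xy by (meson rtrancl_into_rtrancl)
  qed
qed

lemma not_connected_without_cut:
  assumes "graph V E" and "S \<subseteq> V" and "u \<in> S" and "v \<in> V - S"
  shows "\<not> connected_graph V (E - cut_edges V E S)"
proof
  assume "connected_graph V (E - cut_edges V E S)"
  then have "(u, v) \<in> (adj (E - cut_edges V E S))\<^sup>*"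
    using assms by (auto simp: connected_graph_def)
  moreover have "w \<in> S" if "(u, w) \<in> (adj (E - cut_edges V E S))\<^sup>*" for w
    using that
  proof (induction rule: rtrancl_induct)
    case base
    show ?case using assms(3) .
  next
    case (step y z)
    then have "{y, z} \<in> E" "{y, z} \<notin> cut_edges V E S" by (auto simp: adj_def)
    moreover have "z \<in> V" using \<open>{y, z} \<in> E\<close> assms(1) by (auto simp: graph_def)
    ultimately show ?case using step.IH by (auto simp: cut_edges_def)
  qed
  ultimately show False using assms(4) by blast
qed

lemma edge_connectivity_attained_by_cut:
  assumes "graph V E" and "u \<in> V" and "v \<in> V" and "u \<noteq> v"
  obtains S where "S \<subseteq> V" and "card (cut_edges V E S) = edge_connectivity V E"
proof -
  \<comment> \<open>LEAST is unspecified on an unsatisfiable predicate, so first exhibit a disconnecting set.\<close>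
  have "adj (E - E) = {}" by (simp add: adj_def)
  then have "\<not> connected_graph V (E - E)"
    using assms(2-4) by (auto simp: connected_graph_def)
  then have "\<exists>n. \<exists>F \<subseteq> E. card F = n \<and> \<not> connected_graph V (E - F)" by blast
  from LeastI_ex[OF this] obtain F
    where F: "F \<subseteq> E" "card F = edge_connectivity V E" "\<not> connected_graph V (E - F)"
    unfolding edge_connectivity_def by blast
  then obtain x y where xy: "x \<in> V" "y \<in> V" "(x, y) \<notin> (adj (E - F))\<^sup>*"
    using assms(2) by (auto simp: connected_graph_def)
  define S where "S = {w \<in> V. (x, w) \<in> (adj (E - F))\<^sup>*}"
  have "S \<subseteq> V" by (auto simp: S_def)
  have cut_F: "cut_edges V E S \<subseteq> F"
    unfolding S_def using F(1) by (rule cut_edges_subset_of_reachable)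
  have "\<not> connected_graph V (E - cut_edges V E S)"
    by (rule not_connected_without_cut[where u = x and v = y])
      (use assms(1) xy in \<open>auto simp: S_def\<close>)
  then have "edge_connectivity V E \<le> card (cut_edges V E S)"
    unfolding edge_connectivity_def
    by (intro Least_le exI[of _ "cut_edges V E S"]) (auto simp: cut_edges_def)
  moreover have "card (cut_edges V E S) \<le> card F"
    using cut_F F(1) finite_edges[OF assms(1)] by (meson card_mono finite_subset)
  ultimately show ?thesis using that \<open>S \<subseteq> V\<close> F(2) by simp
qed

lemma colour_class_perfect_matching:
  assumes "regular k V E" and "one_factorization k V E col" and "graph V E" and "c \<in> {1..k}"
  shows "perfect_matching V {e \<in> E. col e = c}"
proof -
  have "\<exists>!e. e \<in> E \<and> col e = c \<and> v \<in> e" if v: "v \<in> V" for v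
  proof -
    let ?Ev = "{e \<in> E. v \<in> e}"
    have inj: "inj_on col ?Ev" using assms(2) v by (auto simp: one_factorization_def)
    have "card (col ` ?Ev) = k"
      using card_image[OF inj] assms(1) v by (simp add: regular_def degree_def)
    moreover have "col ` ?Ev \<subseteq> {1..k}" using assms(2) by (auto simp: one_factorization_def)
    ultimately have "col ` ?Ev = {1..k}" using card_subset_eq[of "{1..k}" "col ` ?Ev"] by simp
    then have "c \<in> col ` ?Ev" using assms(4) by simp
    then obtain e where e: "e \<in> ?Ev" "col e = c" by blast
    have "e' = e" if "e' \<in> E" "col e' = c" "v \<in> e'" for e'
      using inj e that by (auto dest: inj_onD)
    then show ?thesis using e by blast
  qed
  moreover have "e \<subseteq> V \<and> card e = 2" if "e \<in> E" for e
    using assms(3) that by (simp add: graph_def)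
  ultimately show ?thesis unfolding perfect_matching_def by blast
qed

lemma card_inter_edge_eq:
  assumes "e = {a, b}" and "a \<noteq> b" and "a \<in> V" and "b \<in> V" and "e \<in> M"
  shows "card (e \<inter> S) = 2 * of_bool (e \<subseteq> S) + of_bool (e \<in> cut_edges V M S)"
proof (cases "a \<in> S"; cases "b \<in> S")
  assume "a \<in> S" "b \<in> S"
  then show ?thesis using assms by (auto simp: cut_edges_def doubleton_eq_iff)
next
  assume "a \<in> S" "b \<notin> S"
  then have "e \<inter> S = {a}" using assms(1) by auto
  then show ?thesis using assms \<open>a \<in> S\<close> \<open>b \<notin> S\<close> by (auto simp: cut_edges_def)
next
  assume "a \<notin> S" "b \<in> S"
  then have "e \<inter> S = {b}" using assms(1) by auto
  then show ?thesis using assms \<open>a \<notin> S\<close> \<open>b \<in> S\<close> by (auto simp: cut_edges_def insert_commute)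
next
  assume "a \<notin> S" "b \<notin> S"
  then show ?thesis using assms by (auto simp: cut_edges_def doubleton_eq_iff)
qed

lemma card_eq_matching_inside_plus_cut:
  assumes "finite V" and "perfect_matching V M" and "S \<subseteq> V"
  shows "card S = 2 * card {e \<in> M. e \<subseteq> S} + card (cut_edges V M S)"
proof -
  have edge: "\<And>e. e \<in> M \<Longrightarrow> e \<subseteq> V \<and> card e = 2"
    and covered: "\<And>v. v \<in> V \<Longrightarrow> \<exists>!e. e \<in> M \<and> v \<in> e"
    using assms(2) by (auto simp: perfect_matching_def)
  have "M \<subseteq> Pow V" using edge by blast
  then have fin_M: "finite M" using assms(1) by (meson finite_Pow_iff finite_subset)
  have disjoint: "(e \<inter> S) \<inter> (e' \<inter> S) = {}" if "e \<in> M" "e' \<in> M" "e \<noteq> e'" for e e'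
    using covered assms(3) that by blast
  have "S \<subseteq> (\<Union>e\<in>M. e \<inter> S)"
  proof
    fix x assume "x \<in> S"
    then obtain e where "e \<in> M" "x \<in> e" using covered assms(3) by blast
    with \<open>x \<in> S\<close> show "x \<in> (\<Union>e\<in>M. e \<inter> S)" by blast
  qed
  then have "S = (\<Union>e\<in>M. e \<inter> S)" by blast
  then have "card S = card (\<Union>e\<in>M. e \<inter> S)" by simp
  also have "\<dots> = (\<Sum>e\<in>M. card (e \<inter> S))"
    using fin_M finite_subset[OF assms(3,1)] disjoint by (intro card_UN_disjoint) auto
  also have "\<dots> = (\<Sum>e\<in>M. 2 * of_bool (e \<subseteq> S) + of_bool (e \<in> cut_edges V M S))"
  proof (rule sum.cong)
    fix e assume "e \<in> M"
    then obtain a b where "e = {a, b}" "a \<noteq> b" using edge by (meson card_2_iff)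
    then show "card (e \<inter> S) = 2 * of_bool (e \<subseteq> S) + of_bool (e \<in> cut_edges V M S)"
      using edge[OF \<open>e \<in> M\<close>] \<open>e \<in> M\<close> by (intro card_inter_edge_eq) auto
  qed simp
  also have "\<dots> = 2 * card {e \<in> M. e \<subseteq> S} + card (cut_edges V M S)"
    using fin_M by (simp add: sum.distrib sum_distrib_left[symmetric] Int_def cut_edges_def)
  finally show ?thesis .
qed

lemma card_cut_edges_sum_colours:
  assumes "graph V E" and "one_factorization k V E col"
  shows "card (cut_edges V E S) = (\<Sum>c\<in>{1..k}. card (cut_edges V {e \<in> E. col e = c} S))"
proof -
  have "cut_edges V E S = (\<Union>c\<in>{1..k}. cut_edges V {e \<in> E. col e = c} S)"
    using assms(2) unfolding cut_edges_def one_factorization_def by fastforce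
  also have "card \<dots> = (\<Sum>c\<in>{1..k}. card (cut_edges V {e \<in> E. col e = c} S))"
    using finite_edges[OF assms(1)] by (intro card_UN_disjoint) (auto simp: cut_edges_def)
  finally show ?thesis by simp
qed

lemma cozy_cut_even_or_large:
  assumes "cozy k V E col" and "S \<subseteq> V"
  shows "even (card (cut_edges V E S)) \<or> k \<le> card (cut_edges V E S)"
proof -
  have G: "graph V E" "regular k V E" "one_factorization k V E col" "finite V"
    using assms(1) by (auto simp: cozy_def graph_def)
  let ?cut = "\<lambda>c. card (cut_edges V {e \<in> E. col e = c} S)"
  have parity: "card S = 2 * card {e \<in> {e \<in> E. col e = c}. e \<subseteq> S} + ?cut c"
    if "c \<in> {1..k}" for c
    using card_eq_matching_inside_plus_cut[OF G(4) colour_class_perfect_matching[OF G(2,3,1) that]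
        assms(2)] .
  show ?thesis
  proof (cases "even (card S)")
    case True
    have "even (?cut c)" if "c \<in> {1..k}" for c using parity[OF that] True by presburger
    then have "even (\<Sum>c\<in>{1..k}. ?cut c)" by (intro dvd_sum) simp
    then show ?thesis using card_cut_edges_sum_colours[OF G(1,3)] by simp
  next
    case False
    have "1 \<le> ?cut c" if "c \<in> {1..k}" for c using parity[OF that] False by presburger
    then have "(\<Sum>c\<in>{1..k}. 1) \<le> (\<Sum>c\<in>{1..k}. ?cut c)" by (intro sum_mono)
    then show ?thesis using card_cut_edges_sum_colours[OF G(1,3)] by simp
  qed
qed

theorem mainTheorem11:
  fixes V :: "'a set" and E :: "'a set set" and col :: "'a set \<Rightarrow> nat" and k :: nat
  assumes "cozy k V E col"
    and "edge_connectivity V E < k"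
  shows "even (edge_connectivity V E)"
proof -
  have G: "graph V E" "connected_graph V E" "regular k V E" "one_factorization k V E col"
    using assms(1) by (auto simp: cozy_def)
  obtain v where v: "v \<in> V" using G(2) by (auto simp: connected_graph_def)
  have "perfect_matching V {e \<in> E. col e = 1}"
    using G assms(2) by (intro colour_class_perfect_matching) auto
  then obtain e where "e \<subseteq> V" "card e = 2" "v \<in> e"
    using v unfolding perfect_matching_def by blast
  then obtain w where w: "w \<in> V" "v \<noteq> w" by (metis card_2_iff insertCI insertE subsetD)
  obtain S where "S \<subseteq> V" and cut: "card (cut_edges V E S) = edge_connectivity V E"
    using edge_connectivity_attained_by_cut[OF G(1) v w] .
  from cozy_cut_even_or_large[OF assms(1) \<open>S \<subseteq> V\<close>] show ?thesis
    unfolding cut using assms(2) by simp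
qed

end
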